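(* Let $(X,\varepsilon)$ and $(Y,\zeta)$ be locally compact paracompact Hausdorff spaces with coarsely connected proper coarse structures, and let $X+_fW\in\mathrm{Pers}(\varepsilon)$. Let $\pi,\pi':Y\to X$ be coarse maps and define $f^\ast(A)=\mathrm{Cl}_W\big(f(\mathrm{Cl}_X(\pi(A)))\big)$ and $f'^\ast(A)=\mathrm{Cl}_W\big(f(\mathrm{Cl}_X(\pi'(A)))\big)$ for $A$ closed in $Y$. If $\pi$ is close to $\pi'$, then $f^\ast=f'^\ast$.
   Context: $X+_fW$ is $X\sqcup W$ with closed sets the $D$ with $D\cap X$ closed in $X$, $D\cap W$ closed in $W$, $f(D\cap X)\subseteq D$, where $f$ (from closed subsets of $X$ to closed subsets of $W$) sends $\emptyset$ to $\emptyset$ and preserves finite unions. Coarse structures, proper and coarsely connected coarse spaces, coarse maps and closeness are in the sense of Roe ($\pi,\pi'$ close means $\{(\pi(y),\pi'(y)):y\in Y\}\in\varepsilon$). $X+_fW\in\mathrm{Pers}(\varepsilon)$ means: $X+_fW$ is compact Hausdorff with $X$ dense, $W$ compact Hausdorff, and every $e\in\varepsilon$ is perspective, i.e. $\mathrm{Cl}_{(X+_fW)^2}(e)\cap((X+_fW)^2-X^2)\subseteq\{(p,p):p\in W\}$. *)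

theory Defs
  imports "HOL-Analysis.Analysis"
begin

definition paracompact_space :: "'a topology \<Rightarrow> bool" where
  "paracompact_space T \<longleftrightarrow>
     (\<forall>\<U>. (\<forall>U\<in>\<U>. openin T U) \<and> topspace T \<subseteq> \<Union>\<U> \<longrightarrow>
        (\<exists>\<V>. (\<forall>V\<in>\<V>. openin T V) \<and> topspace T \<subseteq> \<Union>\<V> \<and>
              (\<forall>V\<in>\<V>. \<exists>U\<in>\<U>. V \<subseteq> U) \<and> locally_finite_in T \<V>))"

definition coarse_structure :: "'a set \<Rightarrow> ('a \<times> 'a) set set \<Rightarrow> bool" where
  "coarse_structure X \<epsilon> \<longleftrightarrow>
     (\<forall>e\<in>\<epsilon>. e \<subseteq> X \<times> X) \<and>
     Id_on X \<in> \<epsilon> \<and>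
     (\<forall>e\<in>\<epsilon>. \<forall>e'. e' \<subseteq> e \<longrightarrow> e' \<in> \<epsilon>) \<and>
     (\<forall>e\<in>\<epsilon>. converse e \<in> \<epsilon>) \<and>
     (\<forall>e\<in>\<epsilon>. \<forall>e'\<in>\<epsilon>. e \<union> e' \<in> \<epsilon>) \<and>
     (\<forall>e\<in>\<epsilon>. \<forall>e'\<in>\<epsilon>. e O e' \<in> \<epsilon>)"

definition coarse_bounded :: "('a \<times> 'a) set set \<Rightarrow> 'a set \<Rightarrow> bool" where
  "coarse_bounded \<epsilon> B \<longleftrightarrow> B \<times> B \<in> \<epsilon>"

definition coarsely_connected :: "'a set \<Rightarrow> ('a \<times> 'a) set set \<Rightarrow> bool" where
  "coarsely_connected X \<epsilon> \<longleftrightarrow> (\<forall>x\<in>X. \<forall>y\<in>X. {(x, y)} \<in> \<epsilon>)"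

definition proper_coarse_structure :: "'a topology \<Rightarrow> ('a \<times> 'a) set set \<Rightarrow> bool" where
  "proper_coarse_structure T \<epsilon> \<longleftrightarrow>
     coarse_structure (topspace T) \<epsilon> \<and>
     (\<forall>B. B \<subseteq> topspace T \<and> coarse_bounded \<epsilon> B \<longrightarrow> compactin T (T closure_of B)) \<and>
     (\<exists>\<U>. (\<forall>U\<in>\<U>. openin T U) \<and> topspace T \<subseteq> \<Union>\<U> \<and> (\<Union>U\<in>\<U>. U \<times> U) \<in> \<epsilon>)"

definition coarse_map ::
  "'b set \<Rightarrow> ('b \<times> 'b) set set \<Rightarrow> 'a set \<Rightarrow> ('a \<times> 'a) set set \<Rightarrow> ('b \<Rightarrow> 'a) \<Rightarrow> bool" where
  "coarse_map Y \<zeta> X \<epsilon> \<pi> \<longleftrightarrow>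
     (\<forall>y\<in>Y. \<pi> y \<in> X) \<and>
     (\<forall>e\<in>\<zeta>. (\<lambda>(a, b). (\<pi> a, \<pi> b)) ` e \<in> \<epsilon>) \<and>
     (\<forall>B. B \<subseteq> X \<and> coarse_bounded \<epsilon> B \<longrightarrow> coarse_bounded \<zeta> ({y\<in>Y. \<pi> y \<in> B}))"

definition coarse_close :: "'b set \<Rightarrow> ('a \<times> 'a) set set \<Rightarrow> ('b \<Rightarrow> 'a) \<Rightarrow> ('b \<Rightarrow> 'a) \<Rightarrow> bool" where
  "coarse_close Y \<epsilon> \<pi> \<pi>' \<longleftrightarrow> {(\<pi> y, \<pi>' y) | y. y \<in> Y} \<in> \<epsilon>"

text \<open>Closed sets of X +_f W, realised on the disjoint union type \<open>'a + 'c\<close>.\<close>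
definition coronal_closed :: "'a topology \<Rightarrow> 'c topology \<Rightarrow> ('a set \<Rightarrow> 'c set) \<Rightarrow> ('a + 'c) set \<Rightarrow> bool" where
  "coronal_closed TX TW f D \<longleftrightarrow>
     D \<subseteq> Inl ` topspace TX \<union> Inr ` topspace TW \<and>
     closedin TX (Inl -` D) \<and> closedin TW (Inr -` D) \<and>
     Inr ` f (Inl -` D) \<subseteq> D"

definition coronal_sum :: "'a topology \<Rightarrow> 'c topology \<Rightarrow> ('a set \<Rightarrow> 'c set) \<Rightarrow> ('a + 'c) topology" where
  "coronal_sum TX TW f = topology (\<lambda>U.
     U \<subseteq> Inl ` topspace TX \<union> Inr ` topspace TW \<and>
     coronal_closed TX TW f ((Inl ` topspace TX \<union> Inr ` topspace TW) - U))"

definition coronal_map :: "'a topology \<Rightarrow> 'c topology \<Rightarrow> ('a set \<Rightarrow> 'c set) \<Rightarrow> bool" where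
  "coronal_map TX TW f \<longleftrightarrow>
     (\<forall>A. closedin TX A \<longrightarrow> closedin TW (f A)) \<and>
     f {} = {} \<and>
     (\<forall>A B. closedin TX A \<and> closedin TX B \<longrightarrow> f (A \<union> B) = f A \<union> f B)"

definition perspective :: "'a topology \<Rightarrow> 'c topology \<Rightarrow> ('a set \<Rightarrow> 'c set) \<Rightarrow> ('a \<times> 'a) set \<Rightarrow> bool" where
  "perspective TX TW f e \<longleftrightarrow>
     (let T = coronal_sum TX TW f; XX = Inl ` topspace TX in
       (prod_topology T T) closure_of ((\<lambda>(a, b). (Inl a, Inl b)) ` e)
         \<inter> (topspace T \<times> topspace T - XX \<times> XX)
       \<subseteq> {(Inr p, Inr p) | p. p \<in> topspace TW})"

definition Pers :: "'a topology \<Rightarrow> ('a \<times> 'a) set set \<Rightarrow> 'c topology \<Rightarrow> ('a set \<Rightarrow> 'c set) \<Rightarrow> bool" where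
  "Pers TX \<epsilon> TW f \<longleftrightarrow>
     (let T = coronal_sum TX TW f in
       compact_space T \<and> Hausdorff_space T \<and>
       T closure_of (Inl ` topspace TX) = topspace T \<and>
       compact_space TW \<and> Hausdorff_space TW \<and>
       (\<forall>e\<in>\<epsilon>. perspective TX TW f e))"

definition pull_corona :: "'b topology \<Rightarrow> 'a topology \<Rightarrow> 'c topology \<Rightarrow> ('a set \<Rightarrow> 'c set) \<Rightarrow> ('b \<Rightarrow> 'a) \<Rightarrow> 'b set \<Rightarrow> 'c set" where
  "pull_corona TY TX TW f \<pi> A = TW closure_of (f (TX closure_of (\<pi> ` A)))"

end

theory Submission
  imports Defs
begin

(* Points of the corona W lying in the closure of Inl ` B are exactly f (closure B),
   by the description of the closed sets of X +_f W. For a controlled set e, a corona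
   point p in the closure of the first projection of e is, by compactness of X +_f W,
   the first coordinate of a point (p, q) in the closure of e in (X +_f W)^2; by
   perspectivity q = p, so p also lies in the closure of the second projection. Applied
   to e = {(\<pi> y, \<pi>' y) | y \<in> A} and its converse this gives the theorem. *)

lemma coronal_map_mono:
  assumes "coronal_map TX TW f" "closedin TX A" "closedin TX B" "A \<subseteq> B"
  shows "f A \<subseteq> f B"
  using assms unfolding coronal_map_def by (metis Un_absorb1 Un_upper1)

lemma coronal_closed_Un:
  assumes "coronal_map TX TW f" "coronal_closed TX TW f C" "coronal_closed TX TW f D"
  shows "coronal_closed TX TW f (C \<union> D)"
proof -
  have "f (Inl -` (C \<union> D)) = f (Inl -` C) \<union> f (Inl -` D)"
    using assms unfolding coronal_map_def coronal_closed_def by (simp add: vimage_Un)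
  then show ?thesis
    using assms(2,3) unfolding coronal_closed_def by (auto simp: vimage_Un)
qed

lemma coronal_closed_Inter:
  assumes f: "coronal_map TX TW f" and "\<D> \<noteq> {}" and \<D>: "\<And>D. D \<in> \<D> \<Longrightarrow> coronal_closed TX TW f D"
  shows "coronal_closed TX TW f (\<Inter>\<D>)"
proof -
  have "Inl -` \<Inter>\<D> = \<Inter>((-`) Inl ` \<D>)" "Inr -` \<Inter>\<D> = \<Inter>((-`) Inr ` \<D>)"
    by auto
  then have closed: "closedin TX (Inl -` \<Inter>\<D>)" "closedin TW (Inr -` \<Inter>\<D>)"
    using \<D> \<open>\<D> \<noteq> {}\<close> by (auto simp: coronal_closed_def intro!: closedin_Inter)
  have "Inr ` f (Inl -` \<Inter>\<D>) \<subseteq> D" if "D \<in> \<D>" for D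
  proof -
    have "f (Inl -` \<Inter>\<D>) \<subseteq> f (Inl -` D)"
      using that \<D>[OF that] closed
      by (intro coronal_map_mono[OF f]) (auto simp: coronal_closed_def)
    then show ?thesis
      using \<D>[OF that] unfolding coronal_closed_def by blast
  qed
  then show ?thesis
    using closed \<D> \<open>\<D> \<noteq> {}\<close> unfolding coronal_closed_def by blast
qed

lemma coronal_closed_topspace:
  assumes "coronal_map TX TW f"
  shows "coronal_closed TX TW f (Inl ` topspace TX \<union> Inr ` topspace TW)"
proof -
  have "f (topspace TX) \<subseteq> topspace TW"
    using assms closedin_subset unfolding coronal_map_def by blast
  moreover have "Inl -` (Inl ` topspace TX \<union> Inr ` topspace TW) = topspace TX"
    and "Inr -` (Inl ` topspace TX \<union> Inr ` topspace TW) = topspace TW"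
    by auto
  ultimately show ?thesis
    unfolding coronal_closed_def by auto
qed

lemma istopology_coronal_sum:
  assumes f: "coronal_map TX TW f"
  defines "S \<equiv> Inl ` topspace TX \<union> Inr ` topspace TW"
  shows "istopology (\<lambda>U. U \<subseteq> S \<and> coronal_closed TX TW f (S - U))"
  unfolding istopology_def
proof (rule conjI; intro allI impI)
  fix U V
  assume "U \<subseteq> S \<and> coronal_closed TX TW f (S - U)" "V \<subseteq> S \<and> coronal_closed TX TW f (S - V)"
  then show "U \<inter> V \<subseteq> S \<and> coronal_closed TX TW f (S - U \<inter> V)"
    using coronal_closed_Un[OF f] by (auto simp: Diff_Int)
next
  fix K
  assume K: "\<forall>U\<in>K. U \<subseteq> S \<and> coronal_closed TX TW f (S - U)"
  have "coronal_closed TX TW f (S - \<Union>K)"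
  proof (cases "K = {}")
    case True
    then show ?thesis using coronal_closed_topspace[OF f] by (simp add: S_def)
  next
    case False
    have "S - \<Union>K = \<Inter>((-) S ` K)" using False by blast
    also have "coronal_closed TX TW f \<dots>"
      by (rule coronal_closed_Inter[OF f]) (use False K in auto)
    finally show ?thesis .
  qed
  with K show "\<Union>K \<subseteq> S \<and> coronal_closed TX TW f (S - \<Union>K)" by blast
qed

lemma openin_coronal_sum:
  assumes "coronal_map TX TW f"
  shows "openin (coronal_sum TX TW f) U \<longleftrightarrow>
     U \<subseteq> Inl ` topspace TX \<union> Inr ` topspace TW \<and>
     coronal_closed TX TW f ((Inl ` topspace TX \<union> Inr ` topspace TW) - U)"
  unfolding coronal_sum_def using istopology_coronal_sum[OF assms] by simp

lemma topspace_coronal_sum: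
  assumes "coronal_map TX TW f"
  shows "topspace (coronal_sum TX TW f) = Inl ` topspace TX \<union> Inr ` topspace TW"
proof -
  let ?S = "Inl ` topspace TX \<union> Inr ` topspace TW"
  have "coronal_closed TX TW f {}"
    using assms unfolding coronal_map_def coronal_closed_def by simp
  then have "openin (coronal_sum TX TW f) ?S"
    by (simp add: openin_coronal_sum[OF assms])
  moreover have "U \<subseteq> ?S" if "openin (coronal_sum TX TW f) U" for U
    using that by (simp add: openin_coronal_sum[OF assms])
  ultimately show ?thesis
    unfolding topspace_def by blast
qed

lemma closedin_coronal_sum:
  assumes "coronal_map TX TW f"
  shows "closedin (coronal_sum TX TW f) D \<longleftrightarrow> coronal_closed TX TW f D"
  unfolding closedin_def topspace_coronal_sum[OF assms] openin_coronal_sum[OF assms]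
  by (metis Diff_Diff_Int Diff_subset coronal_closed_def inf.absorb2)

lemma Inr_in_closure_of_Inl_image:
  assumes f: "coronal_map TX TW f" and B: "B \<subseteq> topspace TX"
  shows "Inr p \<in> coronal_sum TX TW f closure_of (Inl ` B) \<longleftrightarrow> p \<in> f (TX closure_of B)"
proof
  let ?D = "Inl ` (TX closure_of B) \<union> Inr ` f (TX closure_of B)"
  have fB: "closedin TW (f (TX closure_of B))"
    using f closedin_closure_of unfolding coronal_map_def by blast
  have "Inl -` ?D = TX closure_of B" "Inr -` ?D = f (TX closure_of B)"
    by auto
  moreover have "?D \<subseteq> Inl ` topspace TX \<union> Inr ` topspace TW"
    using closure_of_subset_topspace[of TX B] closedin_subset[OF fB] by blast
  ultimately have "coronal_closed TX TW f ?D"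
    unfolding coronal_closed_def using fB by simp
  moreover have "Inl ` B \<subseteq> ?D"
    using closure_of_subset[OF B] by blast
  ultimately have "coronal_sum TX TW f closure_of (Inl ` B) \<subseteq> ?D"
    by (simp add: closure_of_minimal closedin_coronal_sum[OF f])
  then show "Inr p \<in> coronal_sum TX TW f closure_of (Inl ` B) \<Longrightarrow> p \<in> f (TX closure_of B)"
    by blast
next
  let ?C = "coronal_sum TX TW f closure_of (Inl ` B)"
  have C: "coronal_closed TX TW f ?C"
    using closedin_coronal_sum[OF f] closedin_closure_of by blast
  then have "closedin TX (Inl -` ?C)"
    unfolding coronal_closed_def by blast
  moreover have "Inl ` B \<subseteq> ?C"
    using B by (intro closure_of_subset) (auto simp: topspace_coronal_sum[OF f])
  ultimately have "TX closure_of B \<subseteq> Inl -` ?C"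
    by (intro closure_of_minimal) auto
  then have "f (TX closure_of B) \<subseteq> f (Inl -` ?C)"
    by (intro coronal_map_mono[OF f] closedin_closure_of \<open>closedin TX (Inl -` ?C)\<close>)
  with C show "p \<in> f (TX closure_of B) \<Longrightarrow> Inr p \<in> ?C"
    unfolding coronal_closed_def by blast
qed

lemma closure_of_fst_image_subset:
  assumes "compact_space Y" "E \<subseteq> topspace X \<times> topspace Y"
  shows "X closure_of (fst ` E) \<subseteq> fst ` (prod_topology X Y closure_of E)"
  using closed_map_fst[OF assms(1), of X] assms(2)
  by (simp add: closed_map_closure_of_image)

lemma perspective_imp_corona_subset:
  fixes TX :: "'a topology" and TW :: "'c topology"
  assumes f: "coronal_map TX TW f" and compact: "compact_space (coronal_sum TX TW f)"
    and persp: "perspective TX TW f e" and e: "e \<subseteq> topspace TX \<times> topspace TX"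
  shows "f (TX closure_of (fst ` e)) \<subseteq> f (TX closure_of (snd ` e))"
proof
  fix p
  assume p: "p \<in> f (TX closure_of (fst ` e))"
  define T where "T = coronal_sum TX TW f"
  define E :: "(('a + 'c) \<times> ('a + 'c)) set" where "E = (\<lambda>(a, b). (Inl a, Inl b)) ` e"
  have fst_E: "fst ` E = Inl ` fst ` e" and snd_E: "snd ` E = Inl ` snd ` e"
    unfolding E_def by force+
  have fst_e: "fst ` e \<subseteq> topspace TX" and snd_e: "snd ` e \<subseteq> topspace TX"
    using e by auto
  have E: "E \<subseteq> topspace T \<times> topspace T"
    using e by (auto simp: E_def T_def topspace_coronal_sum[OF f])
  have "Inr p \<in> T closure_of (fst ` E)"
    using p fst_E Inr_in_closure_of_Inl_image[OF f fst_e] by (simp add: T_def)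
  then have "Inr p \<in> fst ` (prod_topology T T closure_of E)"
    using closure_of_fst_image_subset[OF compact[folded T_def] E] by blast
  then obtain q where q: "(Inr p, q) \<in> prod_topology T T closure_of E"
    by force
  have "(Inr p, q) \<in> topspace T \<times> topspace T"
    using closure_of_subset_topspace[of "prod_topology T T" E] q by auto
  moreover have "prod_topology T T closure_of E
      \<inter> (topspace T \<times> topspace T - Inl ` topspace TX \<times> Inl ` topspace TX)
      \<subseteq> {(Inr p, Inr p) | p. p \<in> topspace TW}"
    using persp unfolding perspective_def Let_def T_def E_def .
  ultimately have "q = Inr p"
    using q by blast
  moreover have "prod_topology T T closure_of E \<subseteq> (T closure_of (fst ` E)) \<times> (T closure_of (snd ` E))"
    unfolding closure_of_Times[symmetric] by (intro closure_of_mono) force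
  ultimately have "(Inr p, Inr p) \<in> (T closure_of (fst ` E)) \<times> (T closure_of (snd ` E))"
    using q by blast
  then have "Inr p \<in> T closure_of (Inl ` snd ` e)"
    unfolding snd_E by blast
  then show "p \<in> f (TX closure_of (snd ` e))"
    using Inr_in_closure_of_Inl_image[OF f snd_e] by (simp add: T_def)
qed

lemma coarse_structure_subset_closed:
  "coarse_structure X \<epsilon> \<Longrightarrow> e \<in> \<epsilon> \<Longrightarrow> e' \<subseteq> e \<Longrightarrow> e' \<in> \<epsilon>"
  unfolding coarse_structure_def by metis

lemma coarse_structure_converse_closed:
  "coarse_structure X \<epsilon> \<Longrightarrow> e \<in> \<epsilon> \<Longrightarrow> converse e \<in> \<epsilon>"
  unfolding coarse_structure_def by simp

lemma coarse_structure_subset_Times: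
  "coarse_structure X \<epsilon> \<Longrightarrow> e \<in> \<epsilon> \<Longrightarrow> e \<subseteq> X \<times> X"
  unfolding coarse_structure_def by simp

lemma Pers_corona_fst_eq_snd:
  assumes f: "coronal_map TX TW f" and P: "Pers TX \<epsilon> TW f"
    and \<epsilon>: "coarse_structure (topspace TX) \<epsilon>" and "e \<in> \<epsilon>"
  shows "f (TX closure_of (fst ` e)) = f (TX closure_of (snd ` e))"
proof -
  have compact: "compact_space (coronal_sum TX TW f)"
    and persp: "\<And>e. e \<in> \<epsilon> \<Longrightarrow> perspective TX TW f e"
    using P unfolding Pers_def Let_def by blast+
  note corona_subset = perspective_imp_corona_subset[OF f compact persp
      coarse_structure_subset_Times[OF \<epsilon>]]
  have "converse e \<in> \<epsilon>"
    using coarse_structure_converse_closed[OF \<epsilon> \<open>e \<in> \<epsilon>\<close>] .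
  then have "f (TX closure_of (snd ` e)) \<subseteq> f (TX closure_of (fst ` e))"
    using corona_subset[of "converse e"] by (simp add: fst_eq_Domain snd_eq_Range)
  moreover have "f (TX closure_of (fst ` e)) \<subseteq> f (TX closure_of (snd ` e))"
    using corona_subset[OF \<open>e \<in> \<epsilon>\<close> \<open>e \<in> \<epsilon>\<close>] .
  ultimately show ?thesis
    by (rule subset_antisym[rotated])
qed

theorem mainTheorem20:
  fixes TX :: "'a topology" and \<epsilon> :: "('a \<times> 'a) set set"
    and TY :: "'b topology" and \<zeta> :: "('b \<times> 'b) set set"
    and TW :: "'c topology" and f :: "'a set \<Rightarrow> 'c set"
    and \<pi> \<pi>' :: "'b \<Rightarrow> 'a"
  assumes "locally_compact_space TX" "paracompact_space TX" "Hausdorff_space TX"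
    and "locally_compact_space TY" "paracompact_space TY" "Hausdorff_space TY"
    and "proper_coarse_structure TX \<epsilon>" "coarsely_connected (topspace TX) \<epsilon>"
    and "proper_coarse_structure TY \<zeta>" "coarsely_connected (topspace TY) \<zeta>"
    and "coronal_map TX TW f"
    and "Pers TX \<epsilon> TW f"
    and "coarse_map (topspace TY) \<zeta> (topspace TX) \<epsilon> \<pi>"
    and "coarse_map (topspace TY) \<zeta> (topspace TX) \<epsilon> \<pi>'"
    and "coarse_close (topspace TY) \<epsilon> \<pi> \<pi>'"
  shows "\<forall>A. closedin TY A \<longrightarrow> pull_corona TY TX TW f \<pi> A = pull_corona TY TX TW f \<pi>' A"
proof (intro allI impI)
  fix A
  assume "closedin TY A"
  define e where "e = {(\<pi> y, \<pi>' y) | y. y \<in> A}"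
  have \<epsilon>: "coarse_structure (topspace TX) \<epsilon>"
    using assms(7) unfolding proper_coarse_structure_def by blast
  have "e \<subseteq> {(\<pi> y, \<pi>' y) | y. y \<in> topspace TY}"
    using closedin_subset[OF \<open>closedin TY A\<close>] by (auto simp: e_def)
  then have "e \<in> \<epsilon>"
    using assms(15) coarse_structure_subset_closed[OF \<epsilon>] unfolding coarse_close_def by blast
  then have "f (TX closure_of (fst ` e)) = f (TX closure_of (snd ` e))"
    by (rule Pers_corona_fst_eq_snd[OF assms(11,12) \<epsilon>])
  moreover have "fst ` e = \<pi> ` A" "snd ` e = \<pi>' ` A"
    unfolding e_def by force+
  ultimately show "pull_corona TY TX TW f \<pi> A = pull_corona TY TX TW f \<pi>' A"
    unfolding pull_corona_def by simp
qed

end
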